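(* Let $L \ge N$, let $\mathbf{T} \in \mathbb{R}^{L\times N}$ have full rank $N$, and let $\gamma>0$. Define $H:\mathbb{R}^N\rightrightarrows\mathbb{R}^N$ by $\mathbf{y}\in H(\mathbf{x})$ if and only if $\mathbf{x} = \mathbf{T}^{\dagger}S_\gamma\mathbf{T}(\mathbf{x}+\mathbf{y})$. Let $$\mathcal{U}_{\mathbf{T},\gamma} := \{\mathbf{x}\in\mathbb{R}^N : |(\mathbf{T}\mathbf{x})_j| > \gamma(\|\mathbf{T}\mathbf{T}^{\dagger}\|_\infty + 1)\ \text{for all } j=1,\dots,L\}.$$ Then for every $\mathbf{x}\in\mathcal{U}_{\mathbf{T},\gamma}$ the set $H(\mathbf{x})$ consists of exactly one element, namely $H(\mathbf{x}) = \{\gamma\,\mathbf{T}^{\dagger}\operatorname{sign}(\mathbf{T}\mathbf{x})\}$.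
   Context: $\mathbf{T}^*$ is the transpose, $\mathbf{T}^{\dagger}=(\mathbf{T}^*\mathbf{T})^{-1}\mathbf{T}^*$ the Moore–Penrose inverse. $S_\gamma:\mathbb{R}^L\to\mathbb{R}^L$ is componentwise soft shrinkage: $[S_\gamma(\mathbf{y})]_j = y_j-\gamma$ if $y_j\ge\gamma$, $y_j+\gamma$ if $y_j\le-\gamma$, $0$ if $|y_j|<\gamma$. $\|\mathbf{A}\|_\infty = \max_{\|\mathbf{z}\|_\infty=1}\|\mathbf{A}\mathbf{z}\|_\infty$ is the row-sum matrix norm, with $\|\mathbf{z}\|_\infty=\max_j|z_j|$. For $\mathbf{z}\in\mathbb{R}^L$ with no zero components, $\operatorname{sign}\mathbf{z} = (\operatorname{sign} z_j)_{j=1}^L$ with $\operatorname{sign} z_j = 1$ if $z_j>0$ and $-1$ if $z_j<0$. *)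

theory Defs
  imports "HOL-Analysis.Analysis"
begin

definition vec_inf_norm :: "real ^ 'n \<Rightarrow> real" where
  "vec_inf_norm z = Max (range (\<lambda>j. \<bar>z $ j\<bar>))"

definition mat_inf_norm :: "real ^ 'n ^ 'm \<Rightarrow> real" where
  "mat_inf_norm A = Sup {vec_inf_norm (A *v z) | z. vec_inf_norm z = 1}"

text \<open>Moore--Penrose inverse for a full column rank matrix: (T^* T)^{-1} T^*.\<close>
definition pinv :: "real ^ 'n ^ 'l \<Rightarrow> real ^ 'l ^ 'n" where
  "pinv T = matrix_inv (transpose T ** T) ** transpose T"

definition soft_shrink :: "real \<Rightarrow> real ^ 'l \<Rightarrow> real ^ 'l" where
  "soft_shrink \<gamma> y = (\<chi> j. if y $ j \<ge> \<gamma> then y $ j - \<gamma>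
                           else if y $ j \<le> - \<gamma> then y $ j + \<gamma> else 0)"

text \<open>Componentwise sign (only used on vectors with no zero components).\<close>
definition vsign :: "real ^ 'l \<Rightarrow> real ^ 'l" where
  "vsign z = (\<chi> j. sgn (z $ j))"

definition Hmap :: "real ^ 'n ^ 'l \<Rightarrow> real \<Rightarrow> real ^ 'n \<Rightarrow> (real ^ 'n) set" where
  "Hmap T \<gamma> x = {y. x = pinv T *v soft_shrink \<gamma> (T *v (x + y))}"

definition U_set :: "real ^ 'n ^ 'l \<Rightarrow> real \<Rightarrow> (real ^ 'n) set" where
  "U_set T \<gamma> = {x. \<forall>j. \<bar>(T *v x) $ j\<bar> > \<gamma> * (mat_inf_norm (T ** pinv T) + 1)}"

end

theory Submission
  imports Defs
begin

text \<open>Soft shrinkage always has the form S_\<gamma> z = z - \<gamma> \<sigma> with |\<sigma>_j| \<le> 1. Since pinv T is a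
  left inverse of T, applying it to x = pinv T (S_\<gamma> (T (x + y))) shows that y \<in> H(x) exactly when
  y = \<gamma> pinv T \<sigma> for such a \<sigma> realising the shrinkage at T (x + y). For y of this form,
  T (x + y) = T x + \<gamma> T pinv T \<sigma> differs from T x componentwise by at most \<gamma> \<parallel>T pinv T\<parallel>_\<infinity>,
  which on U is less than |(T x)_j| - \<gamma>. So no component changes sign or falls below \<gamma> in
  modulus, the shrinkage subtracts exactly \<gamma> sign (T x), and \<sigma> is forced to be sign (T x).\<close>

lemma vec_inf_norm_eq_infnorm: "vec_inf_norm v = infnorm v"
  unfolding vec_inf_norm_def infnorm_cart
  by (simp add: cSup_eq_Max full_SetCompr_eq)

lemma infnorm_le_iff_cart: "infnorm (v :: real ^ 'n) \<le> c \<longleftrightarrow> (\<forall>i. \<bar>v $ i\<bar> \<le> c)"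
  unfolding vec_inf_norm_eq_infnorm [symmetric] vec_inf_norm_def
  by (subst Max_le_iff) auto

lemma mat_inf_norm_eq: "mat_inf_norm A = Sup {infnorm (A *v z) | z. infnorm z = 1}"
  by (simp add: mat_inf_norm_def vec_inf_norm_eq_infnorm)

lemma infnorm_matrix_vector_le:
  fixes A :: "real ^ 'n ^ 'm"
  shows "infnorm (A *v w) \<le> mat_inf_norm A * infnorm w"
proof (cases "w = 0")
  case False
  let ?S = "{infnorm (A *v z) | z :: real ^ 'n. infnorm z = 1}"
  have "bdd_above ?S"
  proof (rule bdd_aboveI)
    fix t assume "t \<in> ?S"
    then obtain z where t: "t = infnorm (A *v z)" and z: "infnorm z = 1" by auto
    have "t \<le> norm (A *v z)" unfolding t by (rule infnorm_le_norm)
    also have "\<dots> \<le> onorm ((*v) A) * norm z"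
      by (rule onorm [OF matrix_vector_mul_bounded_linear])
    also have "\<dots> \<le> onorm ((*v) A) * (sqrt DIM(real ^ 'n) * infnorm z)"
      by (intro mult_left_mono norm_le_infnorm onorm_pos_le matrix_vector_mul_bounded_linear)
    finally show "t \<le> onorm ((*v) A) * sqrt DIM(real ^ 'n)" using z by simp
  qed
  define z where "z = (1 / infnorm w) *\<^sub>R w"
  have pos: "infnorm w > 0" using False by (simp add: infnorm_pos_lt)
  have "infnorm z = 1" using pos by (simp add: z_def infnorm_mul)
  then have "infnorm (A *v z) \<le> mat_inf_norm A"
    unfolding mat_inf_norm_eq by (intro cSup_upper \<open>bdd_above ?S\<close>) auto
  moreover have "A *v w = infnorm w *\<^sub>R (A *v z)"
    using pos by (simp add: z_def matrix_vector_mult_scaleR)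
  ultimately show ?thesis
    using pos by (simp add: infnorm_mul mult.commute)
qed (simp add: infnorm_0)

lemma mat_inf_norm_nonneg: "mat_inf_norm (A :: real ^ 'n ^ 'm) \<ge> 0"
proof -
  have "0 \<le> mat_inf_norm A * infnorm (1 :: real ^ 'n)"
    using infnorm_matrix_vector_le infnorm_pos_le order_trans by blast
  moreover have "infnorm (1 :: real ^ 'n) > 0" by (simp add: infnorm_pos_lt)
  ultimately show ?thesis by (simp add: zero_le_mult_iff)
qed

lemma matrix_inv_left: "invertible A \<Longrightarrow> matrix_inv A ** A = mat 1"
  unfolding invertible_def matrix_inv_def by (rule someI2_ex) auto

lemma invertible_transpose_mult_self:
  fixes T :: "real ^ 'n ^ 'l"
  assumes "inj ((*v) T)"
  shows "invertible (transpose T ** T)"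
proof -
  have "x = 0" if "(transpose T ** T) *v x = 0" for x
  proof -
    have "inner (T *v x) (T *v x) = inner x ((transpose T ** T) *v x)"
      by (metis dot_lmul_matrix matrix_vector_mul_assoc transpose_matrix_vector transpose_transpose)
    then have "T *v x = 0" using that by simp
    then show "x = 0" using assms by (metis matrix_vector_mult_0_right injD)
  qed
  then show ?thesis
    by (simp add: invertible_left_inverse matrix_left_invertible_ker)
qed

lemma pinv_mult_left:
  fixes T :: "real ^ 'n ^ 'l"
  assumes "rank T = CARD('n)"
  shows "pinv T ** T = mat 1"
  using matrix_inv_left [OF invertible_transpose_mult_self] assms
  by (simp add: pinv_def matrix_mul_assoc full_rank_injective)

lemma pinv_mult_left_vector: "pinv T ** T = mat 1 \<Longrightarrow> pinv T *v (T *v v) = v"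
  by (simp add: matrix_vector_mul_assoc)

lemma sgn_add_of_abs_less: "\<bar>b\<bar> < \<bar>a\<bar> \<Longrightarrow> sgn (a + b) = sgn (a :: real)"
  by (auto simp: sgn_if)

lemma soft_shrink_eq_diff_vsign:
  assumes "\<gamma> \<ge> 0" and "\<And>j. \<gamma> \<le> \<bar>z $ j\<bar>"
  shows "soft_shrink \<gamma> z = z - \<gamma> *\<^sub>R vsign z"
  unfolding vec_eq_iff
proof
  fix j
  show "soft_shrink \<gamma> z $ j = (z - \<gamma> *\<^sub>R vsign z) $ j"
    using assms(1) assms(2) [of j] by (auto simp: soft_shrink_def vsign_def sgn_if)
qed

lemma soft_shrink_eq_diff_bounded:
  fixes z :: "real ^ 'l"
  assumes "\<gamma> > 0"
  obtains \<sigma> where "infnorm \<sigma> \<le> 1" and "soft_shrink \<gamma> z = z - \<gamma> *\<^sub>R \<sigma>"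
proof
  let ?\<sigma> = "(\<chi> j. if z $ j \<ge> \<gamma> then 1 else if z $ j \<le> - \<gamma> then -1 else z $ j / \<gamma>) :: real ^ 'l"
  show "infnorm ?\<sigma> \<le> 1"
    using assms by (auto simp: infnorm_le_iff_cart abs_if divide_simps)
  show "soft_shrink \<gamma> z = z - \<gamma> *\<^sub>R ?\<sigma>"
    using assms by (simp add: vec_eq_iff soft_shrink_def)
qed

lemma soft_shrink_perturbed:
  fixes Q :: "real ^ 'm ^ 'l"
  assumes "\<gamma> > 0" and large: "\<And>j. \<gamma> * (mat_inf_norm Q + 1) < \<bar>z $ j\<bar>"
    and "infnorm \<sigma> \<le> 1"
  shows "soft_shrink \<gamma> (z + \<gamma> *\<^sub>R (Q *v \<sigma>)) = z + \<gamma> *\<^sub>R (Q *v \<sigma>) - \<gamma> *\<^sub>R vsign z"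
proof -
  let ?w = "\<gamma> *\<^sub>R (Q *v \<sigma>)"
  have small: "\<bar>?w $ j\<bar> \<le> \<gamma> * mat_inf_norm Q" for j
  proof -
    have "\<bar>(Q *v \<sigma>) $ j\<bar> \<le> mat_inf_norm Q"
      using component_le_infnorm_cart infnorm_matrix_vector_le [of Q \<sigma>] \<open>infnorm \<sigma> \<le> 1\<close>
        mat_inf_norm_nonneg [of Q] mult_left_le order_trans by metis
    then show ?thesis using \<open>\<gamma> > 0\<close> by (simp add: abs_mult)
  qed
  have "\<gamma> \<le> \<bar>(z + ?w) $ j\<bar>" for j
    using small [of j] large [of j] by (simp add: algebra_simps abs_if split: if_splits)
  moreover have "\<bar>?w $ j\<bar> < \<bar>z $ j\<bar>" for j
    using small [of j] large [of j] \<open>\<gamma> > 0\<close> by (simp add: algebra_simps)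
  then have "vsign (z + ?w) = vsign z"
    by (simp add: vec_eq_iff vsign_def sgn_add_of_abs_less)
  ultimately show ?thesis
    using soft_shrink_eq_diff_vsign [of \<gamma> "z + ?w"] \<open>\<gamma> > 0\<close> by simp
qed

lemma mem_Hmap_iff:
  assumes PT: "pinv T ** T = mat 1" and "\<gamma> > 0"
  shows "y \<in> Hmap T \<gamma> x \<longleftrightarrow>
    (\<exists>\<sigma>. infnorm \<sigma> \<le> 1 \<and> y = \<gamma> *\<^sub>R (pinv T *v \<sigma>) \<and>
         soft_shrink \<gamma> (T *v (x + y)) = T *v (x + y) - \<gamma> *\<^sub>R \<sigma>)"
  (is "_ \<longleftrightarrow> ?decomposable")
proof -
  have pinv_shrink: "pinv T *v (T *v (x + y) - \<gamma> *\<^sub>R \<sigma>) = x + y - \<gamma> *\<^sub>R (pinv T *v \<sigma>)" for \<sigma>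
    by (simp add: matrix_vector_mult_diff_distrib matrix_vector_mult_scaleR pinv_mult_left_vector [OF PT])
  show ?thesis
  proof
    assume "y \<in> Hmap T \<gamma> x"
    then have x: "x = pinv T *v soft_shrink \<gamma> (T *v (x + y))" by (simp add: Hmap_def)
    obtain \<sigma> where "infnorm \<sigma> \<le> 1" and \<sigma>: "soft_shrink \<gamma> (T *v (x + y)) = T *v (x + y) - \<gamma> *\<^sub>R \<sigma>"
      using soft_shrink_eq_diff_bounded \<open>\<gamma> > 0\<close> by blast
    moreover have "x = x + y - \<gamma> *\<^sub>R (pinv T *v \<sigma>)"
      using x unfolding \<sigma> pinv_shrink .
    then have "y = \<gamma> *\<^sub>R (pinv T *v \<sigma>)" by (simp add: algebra_simps)
    ultimately show ?decomposable by blast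
  next
    assume ?decomposable
    then obtain \<sigma> where y: "y = \<gamma> *\<^sub>R (pinv T *v \<sigma>)"
      and \<sigma>: "soft_shrink \<gamma> (T *v (x + y)) = T *v (x + y) - \<gamma> *\<^sub>R \<sigma>" by blast
    have "pinv T *v soft_shrink \<gamma> (T *v (x + y)) = x"
      unfolding \<sigma> pinv_shrink by (simp add: y)
    then show "y \<in> Hmap T \<gamma> x" by (simp add: Hmap_def)
  qed
qed

theorem theorem2p7:
  fixes T :: "real ^ 'n ^ 'l" and \<gamma> :: real
  assumes "CARD('n) \<le> CARD('l)"
    and "rank T = CARD('n)"
    and "\<gamma> > 0"
    and "x \<in> U_set T \<gamma>"
  shows "Hmap T \<gamma> x = {\<gamma> *\<^sub>R (pinv T *v vsign (T *v x))}"
proof -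
  \<comment> \<open>The hypothesis CARD('n) \<le> CARD('l) is implied by the rank condition and not needed.\<close>
  let ?s = "vsign (T *v x)"
  have PT: "pinv T ** T = mat 1" using pinv_mult_left [OF assms(2)] .
  have shrink: "soft_shrink \<gamma> (T *v (x + \<gamma> *\<^sub>R (pinv T *v \<sigma>)))
      = T *v (x + \<gamma> *\<^sub>R (pinv T *v \<sigma>)) - \<gamma> *\<^sub>R ?s" if "infnorm \<sigma> \<le> 1" for \<sigma>
    using soft_shrink_perturbed [OF assms(3) _ that, of "T ** pinv T" "T *v x"] assms(4)
    by (simp add: U_set_def matrix_vector_right_distrib matrix_vector_mult_scaleR matrix_vector_mul_assoc)
  have "infnorm ?s \<le> 1" by (simp add: infnorm_le_iff_cart vsign_def abs_sgn_eq)
  then have "\<gamma> *\<^sub>R (pinv T *v ?s) \<in> Hmap T \<gamma> x"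
    using mem_Hmap_iff [OF PT assms(3)] shrink by blast
  moreover have "y = \<gamma> *\<^sub>R (pinv T *v ?s)" if "y \<in> Hmap T \<gamma> x" for y
  proof -
    obtain \<sigma> where "infnorm \<sigma> \<le> 1" and y: "y = \<gamma> *\<^sub>R (pinv T *v \<sigma>)"
      and "soft_shrink \<gamma> (T *v (x + y)) = T *v (x + y) - \<gamma> *\<^sub>R \<sigma>"
      using \<open>y \<in> Hmap T \<gamma> x\<close> mem_Hmap_iff [OF PT assms(3)] by blast
    then have "\<sigma> = ?s" using shrink assms(3) by simp
    then show ?thesis using y by simp
  qed
  ultimately show ?thesis by blast
qed

end
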